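(* Let $X$ be a $CAT(\kappa)$ space and $p\in X$. Suppose the open ball $B_r(p)$ is a topological $n$-manifold for some $r<\pi_\kappa/2$. Then every geodesic $[xy]\subset B_r(p)$ can be extended to a geodesic whose endpoints lie on the sphere $S_r(p)=\{z:d(z,p)=r\}$.
   Context: $\pi_\kappa=\pi/\sqrt\kappa$ if $\kappa>0$ and $\infty$ otherwise. $CAT(\kappa)$: complete geodesic space in which for every triangle $x,y,z$ of perimeter $<2\pi_\kappa$ and every $q$ on a geodesic $[xz]$, $d(y,q)\le d(\bar y,\bar q)$ for the comparison triangle in the simply connected surface of constant curvature $\kappa$ and corresponding point $\bar q$. *)

theory Defs
  imports "HOL-Analysis.Analysis"
begin

definition pi_kappa :: "real \<Rightarrow> ereal" where
  "pi_kappa \<kappa> = (if \<kappa> > 0 then ereal (pi / sqrt \<kappa>) else \<infinity>)"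

definition geodesic_path :: "'a::metric_space \<Rightarrow> 'a \<Rightarrow> (real \<Rightarrow> 'a) \<Rightarrow> bool" where
  "geodesic_path x y g \<longleftrightarrow> g 0 = x \<and> g (dist x y) = y \<and>
     (\<forall>s\<in>{0..dist x y}. \<forall>t\<in>{0..dist x y}. dist (g s) (g t) = \<bar>s - t\<bar>)"

text \<open>Model surface M_kappa of constant curvature kappa, realised in R^3:
  kappa = 0: the plane c = 0 with Euclidean distance;
  kappa > 0: the sphere of radius 1/sqrt kappa with its intrinsic (great circle) distance;
  kappa < 0: the upper sheet of the hyperboloid a^2+b^2-c^2 = 1/kappa (hyperboloid model).\<close>
definition model_space :: "real \<Rightarrow> (real \<times> real \<times> real) set" where
  "model_space \<kappa> =
     (if \<kappa> = 0 then {(a, b, c). c = 0}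
      else if \<kappa> > 0 then {(a, b, c). a\<^sup>2 + b\<^sup>2 + c\<^sup>2 = 1 / \<kappa>}
      else {(a, b, c). a\<^sup>2 + b\<^sup>2 - c\<^sup>2 = 1 / \<kappa> \<and> c > 0})"

definition model_dist :: "real \<Rightarrow> real \<times> real \<times> real \<Rightarrow> real \<times> real \<times> real \<Rightarrow> real" where
  "model_dist \<kappa> u v =
     (case u of (a, b, c) \<Rightarrow> case v of (a', b', c') \<Rightarrow>
        if \<kappa> = 0 then sqrt ((a - a')\<^sup>2 + (b - b')\<^sup>2 + (c - c')\<^sup>2)
        else if \<kappa> > 0 then arccos (\<kappa> * (a * a' + b * b' + c * c')) / sqrt \<kappa>
        else arcosh (\<kappa> * (a * a' + b * b' - c * c')) / sqrt (- \<kappa>))"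

text \<open>CAT(kappa): complete geodesic space such that for every triangle x,y,z of perimeter
  < 2 pi_kappa, every geodesic g from x to z and every point q = g t on it, d(y,q) is at most
  the distance from ybar to the corresponding point qbar (on the segment [xbar zbar] with
  d(xbar,qbar) = d(x,q)) in a comparison triangle in M_kappa.\<close>
definition CAT :: "real \<Rightarrow> 'a::metric_space itself \<Rightarrow> bool" where
  "CAT \<kappa> _ \<longleftrightarrow>
     complete (UNIV :: 'a set) \<and>
     (\<forall>x y :: 'a. \<exists>g. geodesic_path x y g) \<and>
     (\<forall>(x::'a) y z g t. geodesic_path x z g \<and> 0 \<le> t \<and> t \<le> dist x z \<and>
        ereal (dist x y + dist y z + dist x z) < 2 * pi_kappa \<kappa> \<longrightarrow>
        (\<forall>x' y' z' q'. x' \<in> model_space \<kappa> \<and> y' \<in> model_space \<kappa> \<and> z' \<in> model_space \<kappa> \<and>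
            q' \<in> model_space \<kappa> \<and>
            model_dist \<kappa> x' y' = dist x y \<and> model_dist \<kappa> y' z' = dist y z \<and>
            model_dist \<kappa> x' z' = dist x z \<and>
            model_dist \<kappa> x' q' = t \<and> model_dist \<kappa> q' z' = dist x z - t \<longrightarrow>
            dist y (g t) \<le> model_dist \<kappa> y' q'))"

text \<open>S is a topological n-manifold (n = CARD('n)): second countable (Hausdorff is automatic in a
  metric space) and every point has an open neighbourhood in S homeomorphic to an open
  subset of R^n.\<close>
definition topological_manifold :: "'a::metric_space set \<Rightarrow> 'n::finite itself \<Rightarrow> bool" where
  "topological_manifold S _ \<longleftrightarrow>
     second_countable (top_of_set S) \<and>
     (\<forall>x\<in>S. \<exists>U (V :: (real ^ 'n) set). openin (top_of_set S) U \<and> x \<in> U \<and> open V \<and>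
        U homeomorphic V)"

end

theory Submission
  imports Defs
begin

text \<open>Extend the geodesic forwards, and then its reversal forwards, until it meets the sphere.
  Locally, one can always continue a segment [x0 y] with y inside the ball: take a small chart
  ball around y and move every point of it a small fixed fraction of the way towards x0 along
  geodesics. In a CAT space geodesics of length below pi_kappa are unique and vary
  continuously, so this is a homotopy of the chart ball. If no point z near y had y on the
  segment [x0 z], the homotopy would avoid y on the chart sphere and at its final time, and
  the radial combination of the two would give a retraction of the ball onto its boundary
  sphere. Zorn's lemma, applied to the extensions of the segment ordered by their graphs,
  turns the local step into an extension up to the sphere; completeness supplies the
  endpoint of a limit of extensions.\<close>

section \<open>Geodesic parametrisations\<close>

definition geodesic_on :: "real set \<Rightarrow> (real \<Rightarrow> 'a::metric_space) \<Rightarrow> bool" where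
  "geodesic_on S g \<longleftrightarrow> (\<forall>s\<in>S. \<forall>t\<in>S. dist (g s) (g t) = \<bar>s - t\<bar>)"

lemma geodesic_path_iff_geodesic_on:
  "geodesic_path x y g \<longleftrightarrow> g 0 = x \<and> g (dist x y) = y \<and> geodesic_on {0..dist x y} g"
  by (simp add: geodesic_path_def geodesic_on_def)

lemma geodesic_onD: "geodesic_on S g \<Longrightarrow> s \<in> S \<Longrightarrow> t \<in> S \<Longrightarrow> dist (g s) (g t) = \<bar>s - t\<bar>"
  by (simp add: geodesic_on_def)

lemma geodesic_on_reflect:
  assumes "geodesic_on {a..b} g"
  shows "geodesic_on {c - b..c - a} (\<lambda>s. g (c - s))"
  unfolding geodesic_on_def
proof (intro ballI)
  fix s t assume "s \<in> {c - b..c - a}" "t \<in> {c - b..c - a}"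
  then have "c - s \<in> {a..b}" "c - t \<in> {a..b}" by auto
  then show "dist (g (c - s)) (g (c - t)) = \<bar>s - t\<bar>"
    using geodesic_onD[OF assms] by (simp add: abs_minus_commute)
qed

lemma geodesic_on_shift:
  assumes "geodesic_on {a..b} g"
  shows "geodesic_on {a - d..b - d} (\<lambda>s. g (s + d))"
  unfolding geodesic_on_def
proof (intro ballI)
  fix s t assume "s \<in> {a - d..b - d}" "t \<in> {a - d..b - d}"
  then have "s + d \<in> {a..b}" "t + d \<in> {a..b}" by auto
  then show "dist (g (s + d)) (g (t + d)) = \<bar>s - t\<bar>"
    using geodesic_onD[OF assms] by simp
qed

lemma geodesic_path_point_dist:
  assumes "geodesic_path a b g" "0 \<le> s" "s \<le> 1"
  shows "dist a (g (s * dist a b)) = s * dist a b"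
    and "dist (g (s * dist a b)) b = (1 - s) * dist a b"
proof -
  have g: "geodesic_on {0..dist a b} g" "g 0 = a" "g (dist a b) = b"
    using assms(1) by (auto simp: geodesic_path_iff_geodesic_on)
  have "s * dist a b \<in> {0..dist a b}" using assms(2,3) by (auto intro: mult_left_le_one_le)
  then show "dist a (g (s * dist a b)) = s * dist a b"
    and "dist (g (s * dist a b)) b = (1 - s) * dist a b"
    using geodesic_onD[OF g(1), of 0 "s * dist a b"] geodesic_onD[OF g(1), of "s * dist a b" "dist a b"]
      g(2,3) assms(2) by (auto simp: algebra_simps)
qed

lemma geodesic_on_extend_endpoint:
  fixes g :: "real \<Rightarrow> 'a::metric_space"
  assumes "complete (UNIV :: 'a set)" and "a < T" and g: "geodesic_on {a..<T} g"
  obtains w where "\<And>s. s \<in> {a..<T} \<Longrightarrow> dist (g s) w = T - s"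
proof -
  define \<sigma> where "\<sigma> n = T - (T - a) / real (Suc n)" for n
  have \<sigma>: "\<sigma> n \<in> {a..<T}" for n
  proof -
    have "(T - a) / real (Suc n) \<le> T - a" "0 < (T - a) / real (Suc n)"
      using \<open>a < T\<close> by (auto simp: divide_le_eq)
    then show ?thesis by (auto simp: \<sigma>_def)
  qed
  have "\<sigma> \<longlonglongrightarrow> T - (T - a) * 0"
    unfolding \<sigma>_def divide_inverse by (intro tendsto_intros LIMSEQ_inverse_real_of_nat)
  then have \<sigma>T: "\<sigma> \<longlonglongrightarrow> T" by simp
  have "Cauchy (g \<circ> \<sigma>)"
    using LIMSEQ_imp_Cauchy[OF \<sigma>T] geodesic_onD[OF g \<sigma> \<sigma>]
    by (simp add: Cauchy_def dist_real_def)
  then obtain w where w: "(g \<circ> \<sigma>) \<longlonglongrightarrow> w"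
    using assms(1) by (auto simp: complete_def)
  show thesis
  proof
    fix s assume s: "s \<in> {a..<T}"
    have "(\<lambda>n. dist (g s) (g (\<sigma> n))) \<longlonglongrightarrow> dist (g s) w"
      using w by (intro tendsto_intros) (simp add: comp_def)
    moreover have "(\<lambda>n. dist (g s) (g (\<sigma> n))) = (\<lambda>n. \<bar>s - \<sigma> n\<bar>)"
      using geodesic_onD[OF g s \<sigma>] by simp
    moreover have "(\<lambda>n. \<bar>s - \<sigma> n\<bar>) \<longlonglongrightarrow> \<bar>s - T\<bar>"
      by (intro tendsto_intros \<sigma>T)
    ultimately show "dist (g s) w = T - s"
      using LIMSEQ_unique s by fastforce
  qed
qed

lemma le_of_forall_le_plus_gap:
  fixes x y :: real
  assumes "a < T" and gap: "\<And>u. a \<le> u \<Longrightarrow> u < T \<Longrightarrow> x \<le> y + 2 * (T - u)"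
  shows "x \<le> y"
proof (rule field_le_epsilon)
  fix e :: real assume "e > 0"
  define u where "u = max a (T - e / 2)"
  have "a \<le> u" "u < T" "T - e / 2 \<le> u" using \<open>a < T\<close> \<open>e > 0\<close> by (auto simp: u_def)
  then have "x \<le> y + 2 * (T - u)" using gap by blast
  then show "x \<le> y + e" using \<open>T - e / 2 \<le> u\<close> by (simp add: algebra_simps)
qed

text \<open>The value at T is supplied by completeness; a point of G at time T must agree with it.\<close>
lemma isometric_relation_extends_to_geodesic:
  fixes G :: "(real \<times> 'a::metric_space) set"
  assumes "complete (UNIV :: 'a set)" "0 < T"
    and iso: "\<And>s w s' w'. (s, w) \<in> G \<Longrightarrow> (s', w') \<in> G \<Longrightarrow> dist w w' = \<bar>s - s'\<bar>"
    and dom: "\<And>s w. (s, w) \<in> G \<Longrightarrow> s \<in> {0..T}"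
    and total: "\<And>s. s \<in> {0..<T} \<Longrightarrow> \<exists>w. (s, w) \<in> G"
  obtains f where "geodesic_on {0..T} f" "G \<subseteq> (\<lambda>s. (s, f s)) ` {0..T}"
proof -
  define g where "g s = (THE w. (s, w) \<in> G)" for s
  have g: "g s = w" if sw: "(s, w) \<in> G" for s w
    unfolding g_def
  proof (rule the_equality)
    show "(s, w) \<in> G" by (rule sw)
    show "w' = w" if "(s, w') \<in> G" for w'
      using iso[OF that sw] by simp
  qed
  have "geodesic_on {0..<T} g"
    unfolding geodesic_on_def
  proof (intro ballI)
    fix s u assume "s \<in> {0..<T}" "u \<in> {0..<T}"
    then obtain v v' where sv: "(s, v) \<in> G" and uv: "(u, v') \<in> G" using total by blast
    then show "dist (g s) (g u) = \<bar>s - u\<bar>" using g[OF sv] g[OF uv] iso[OF sv uv] by simp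
  qed
  then obtain w where w: "\<And>s. s \<in> {0..<T} \<Longrightarrow> dist (g s) w = T - s"
    using geodesic_on_extend_endpoint[OF assms(1,2)] by blast
  define f where "f = g(T := w)"
  have "geodesic_on {0..T} f"
    unfolding geodesic_on_def
  proof (intro ballI)
    fix s u assume "s \<in> {0..T}" "u \<in> {0..T}"
    then consider "s < T" "u < T" | "s < T" "u = T" | "s = T" "u < T" | "s = T" "u = T"
      by fastforce
    then show "dist (f s) (f u) = \<bar>s - u\<bar>"
      using \<open>s \<in> {0..T}\<close> \<open>u \<in> {0..T}\<close> geodesic_onD[OF \<open>geodesic_on {0..<T} g\<close>, of s u]
      by cases (auto simp: f_def w dist_commute[of w])
  qed
  moreover have "v = f s" if "(s, v) \<in> G" for s v
  proof (cases "s < T")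
    case True
    then show ?thesis using g[OF that] by (simp add: f_def)
  next
    case False
    then have "s = T" using dom[OF that] by simp
    have "dist v w \<le> 0 + 2 * (T - u)" if "0 \<le> u" "u < T" for u
    proof -
      obtain v' where uv': "(u, v') \<in> G" using total \<open>0 \<le> u\<close> \<open>u < T\<close> by auto
      have "dist v (g u) = T - u" "dist (g u) w = T - u"
        using iso[OF \<open>(s, v) \<in> G\<close> uv'] g[OF uv'] w \<open>s = T\<close> that by auto
      then show ?thesis using dist_triangle[of v w "g u"] by simp
    qed
    then have "dist v w \<le> 0" using le_of_forall_le_plus_gap[OF \<open>0 < T\<close>] by blast
    then show ?thesis using \<open>s = T\<close> by (simp add: f_def)
  qed
  then have "G \<subseteq> (\<lambda>s. (s, f s)) ` {0..T}" using dom by force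
  ultimately show thesis using that by blast
qed

section \<open>Comparison geometry of CAT(\<kappa>) spaces\<close>

lemma model_space_segment_spherical:
  assumes "\<kappa> > 0" and D: "D * sqrt \<kappa> \<le> pi"
  shows "\<exists>P. range P \<subseteq> model_space \<kappa> \<and>
           (\<forall>s\<in>{0..D}. \<forall>s'\<in>{0..D}. model_dist \<kappa> (P s) (P s') = \<bar>s - s'\<bar>)"
proof -
  define q where "q = sqrt \<kappa>"
  have q: "q > 0" "q^2 = \<kappa>" using assms by (auto simp: q_def)
  define P where "P s = (cos (s * q) / q, sin (s * q) / q, 0::real)" for s
  have "P s \<in> model_space \<kappa>" for s
  proof -
    have "(cos (s * q) / q)^2 + (sin (s * q) / q)^2 = (cos (s * q)^2 + sin (s * q)^2) / q^2"
      by (simp only: power_divide add_divide_distrib)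
    then show ?thesis using assms q by (simp add: model_space_def P_def)
  qed
  moreover have "model_dist \<kappa> (P s) (P s') = \<bar>s - s'\<bar>" if "s \<in> {0..D}" "s' \<in> {0..D}" for s s'
  proof -
    have "\<kappa> * (cos (s * q) / q * (cos (s' * q) / q) + sin (s * q) / q * (sin (s' * q) / q) + 0 * 0)
        = cos (s * q - s' * q)"
      using assms q by (simp add: cos_diff field_simps power2_eq_square)
    also have "\<dots> = cos (\<bar>s - s'\<bar> * q)"
      using q by (metis abs_mult_pos cos_abs_real left_diff_distrib less_imp_le)
    finally have e: "\<kappa> * (cos (s * q) / q * (cos (s' * q) / q)
        + sin (s * q) / q * (sin (s' * q) / q) + 0 * 0) = cos (\<bar>s - s'\<bar> * q)" .
    have "\<bar>s - s'\<bar> * q \<le> D * q" using that q by (intro mult_right_mono) auto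
    then have "\<bar>s - s'\<bar> * q \<le> pi" using D unfolding q_def by linarith
    then have "arccos (cos (\<bar>s - s'\<bar> * q)) = \<bar>s - s'\<bar> * q"
      using q by (intro arccos_cos) auto
    then show ?thesis using assms q e by (simp add: model_dist_def P_def q_def)
  qed
  ultimately show ?thesis by blast
qed

lemma model_space_segment_hyperbolic:
  assumes "\<kappa> < 0"
  shows "\<exists>P. range P \<subseteq> model_space \<kappa> \<and> (\<forall>s s'. model_dist \<kappa> (P s) (P s') = \<bar>s - s'\<bar>)"
proof -
  define q where "q = sqrt (- \<kappa>)"
  have q: "q > 0" "q^2 = - \<kappa>" using assms by (auto simp: q_def)
  define P where "P s = (sinh (s * q) / q, 0::real, cosh (s * q) / q)" for s
  have "P s \<in> model_space \<kappa>" for s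
  proof -
    have "(sinh (s * q) / q)^2 + 0^2 - (cosh (s * q) / q)^2 = (sinh (s * q)^2 - cosh (s * q)^2) / q^2"
      by (simp add: power_divide diff_divide_distrib)
    then show ?thesis using assms q by (simp add: model_space_def P_def cosh_square_eq)
  qed
  moreover have "model_dist \<kappa> (P s) (P s') = \<bar>s - s'\<bar>" for s s'
  proof -
    have "\<kappa> * (sinh (s * q) / q * (sinh (s' * q) / q) + 0 * 0 - cosh (s * q) / q * (cosh (s' * q) / q))
        = cosh (s * q - s' * q)"
      using assms q by (simp add: cosh_diff field_simps power2_eq_square)
    also have "\<dots> = cosh \<bar>s * q - s' * q\<bar>" by (simp add: abs_if)
    also have "\<bar>s * q - s' * q\<bar> = \<bar>s - s'\<bar> * q"
      using q by (simp add: abs_mult left_diff_distrib[symmetric])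
    finally have e: "\<kappa> * (sinh (s * q) / q * (sinh (s' * q) / q) + 0 * 0
        - cosh (s * q) / q * (cosh (s' * q) / q)) = cosh (\<bar>s - s'\<bar> * q)" .
    have "arcosh (cosh (\<bar>s - s'\<bar> * q)) = \<bar>s - s'\<bar> * q"
      using q by (intro arcosh_cosh_real) auto
    then show ?thesis using assms q e by (simp add: model_dist_def P_def q_def)
  qed
  ultimately show ?thesis by blast
qed

lemma model_space_segment:
  assumes "ereal D < pi_kappa \<kappa>"
  shows "\<exists>P. range P \<subseteq> model_space \<kappa> \<and>
           (\<forall>s\<in>{0..D}. \<forall>s'\<in>{0..D}. model_dist \<kappa> (P s) (P s') = \<bar>s - s'\<bar>)"
proof (cases "\<kappa> = 0")
  case True
  show ?thesis
    by (rule exI[of _ "\<lambda>s. (s, 0, 0)"]) (simp add: True model_space_def model_dist_def image_subset_iff)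
next
  case False
  consider "\<kappa> > 0" | "\<kappa> < 0" using False by linarith
  then show ?thesis
  proof cases
    case 1
    then have "D < pi / sqrt \<kappa>"
      using assms by (simp add: pi_kappa_def)
    then have "D * sqrt \<kappa> \<le> pi"
      using 1 by (simp add: less_divide_eq)
    then show ?thesis by (rule model_space_segment_spherical[OF 1])
  next
    case 2
    then obtain P where "range P \<subseteq> model_space \<kappa>" "\<forall>s s'. model_dist \<kappa> (P s) (P s') = \<bar>s - s'\<bar>"
      using model_space_segment_hyperbolic by blast
    then show ?thesis by (intro exI[of _ P]) simp
  qed
qed

lemma CAT_complete: "CAT \<kappa> TYPE('a::metric_space) \<Longrightarrow> complete (UNIV :: 'a set)"
  by (simp add: CAT_def)

lemma CAT_geodesic_path_exists:
  fixes x y :: "'a::metric_space"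
  shows "CAT \<kappa> TYPE('a) \<Longrightarrow> \<exists>g. geodesic_path x y g"
  by (simp add: CAT_def)

lemma CAT_comparison:
  fixes x y z :: "'a::metric_space"
  assumes "CAT \<kappa> TYPE('a)" and "geodesic_path x z g" and "0 \<le> t" "t \<le> dist x z"
    and "ereal (dist x y + dist y z + dist x z) < 2 * pi_kappa \<kappa>"
    and "x' \<in> model_space \<kappa>" "y' \<in> model_space \<kappa>" "z' \<in> model_space \<kappa>" "q' \<in> model_space \<kappa>"
    and "model_dist \<kappa> x' y' = dist x y" "model_dist \<kappa> y' z' = dist y z"
      "model_dist \<kappa> x' z' = dist x z"
    and "model_dist \<kappa> x' q' = t" "model_dist \<kappa> q' z' = dist x z - t"
  shows "dist y (g t) \<le> model_dist \<kappa> y' q'"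
proof -
  from assms(1) have "\<forall>(x::'a) y z g t. geodesic_path x z g \<and> 0 \<le> t \<and> t \<le> dist x z \<and>
        ereal (dist x y + dist y z + dist x z) < 2 * pi_kappa \<kappa> \<longrightarrow>
        (\<forall>x' y' z' q'. x' \<in> model_space \<kappa> \<and> y' \<in> model_space \<kappa> \<and> z' \<in> model_space \<kappa> \<and>
            q' \<in> model_space \<kappa> \<and>
            model_dist \<kappa> x' y' = dist x y \<and> model_dist \<kappa> y' z' = dist y z \<and>
            model_dist \<kappa> x' z' = dist x z \<and>
            model_dist \<kappa> x' q' = t \<and> model_dist \<kappa> q' z' = dist x z - t \<longrightarrow>
            dist y (g t) \<le> model_dist \<kappa> y' q')"
    unfolding CAT_def by blast
  then show ?thesis
    using assms(2-) by (elim allE[where x = x] allE[where x = y] allE[where x = z] allE[where x = g] allE[where x = t]) blast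
qed

text \<open>Degenerate comparison triangle: all four comparison points lie on one model segment,
  so the comparison distance is 0.\<close>
lemma CAT_between_on_geodesic:
  fixes x y z :: "'a::metric_space"
  assumes cat: "CAT \<kappa> TYPE('a)" and g: "geodesic_path x z g"
    and between: "dist x y + dist y z = dist x z"
    and short: "ereal (dist x z) < pi_kappa \<kappa>"
  shows "y = g (dist x y)"
proof -
  let ?D = "dist x z" and ?t = "dist x y"
  obtain P where P: "range P \<subseteq> model_space \<kappa>"
    and Pdist: "\<And>s s'. s \<in> {0..?D} \<Longrightarrow> s' \<in> {0..?D} \<Longrightarrow> model_dist \<kappa> (P s) (P s') = \<bar>s - s'\<bar>"
    using model_space_segment[OF short] by blast
  have t: "0 \<le> ?t" "?t \<le> ?D" using between zero_le_dist[of y z] by (simp, linarith)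
  have "ereal (dist x y + dist y z + dist x z) < 2 * pi_kappa \<kappa>"
    using short between by (cases "\<kappa> > 0") (auto simp: pi_kappa_def)
  then have "dist y (g ?t) \<le> model_dist \<kappa> (P ?t) (P ?t)"
    using t between P Pdist[of 0 ?t] Pdist[of ?t ?D] Pdist[of 0 ?D]
    by (intro CAT_comparison[OF cat g]) auto
  also have "\<dots> = 0" using Pdist[of ?t ?t] t by simp
  finally show ?thesis by simp
qed

lemma CAT_between_unique:
  fixes x z w w' :: "'a::metric_space"
  assumes cat: "CAT \<kappa> TYPE('a)" and short: "ereal (dist x z) < pi_kappa \<kappa>"
    and "dist x w + dist w z = dist x z" "dist x w' + dist w' z = dist x z"
    and "dist x w = dist x w'"
  shows "w = w'"
proof -
  obtain g where "geodesic_path x z g" using CAT_geodesic_path_exists[OF cat] by blast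
  then show ?thesis using CAT_between_on_geodesic[OF cat _ _ short] assms(3-5) by metis
qed

lemma diameter_less_pi_kappa:
  assumes "ereal r < pi_kappa \<kappa> / 2" and "D \<le> 2 * r"
  shows "ereal D < pi_kappa \<kappa>"
  using assms by (cases "\<kappa> > 0") (auto simp: pi_kappa_def)

section \<open>Balls, spheres and manifold charts\<close>

lemma sphere_fixing_map_hits_centre:
  fixes \<Phi> :: "'b::euclidean_space \<Rightarrow> 'b"
  assumes "\<rho> > 0" and cont: "continuous_on (cball c \<rho>) \<Phi>"
    and fixed: "\<And>v. v \<in> sphere c \<rho> \<Longrightarrow> \<Phi> v = v"
  shows "\<exists>v\<in>cball c \<rho>. \<Phi> v = c"
proof (rule ccontr)
  assume "\<not> ?thesis"
  then have avoid: "\<And>v. v \<in> cball c \<rho> \<Longrightarrow> \<Phi> v \<noteq> c" by blast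
  define R where "R v = c + (\<rho> / norm (\<Phi> v - c)) *\<^sub>R (\<Phi> v - c)" for v
  have "retraction (cball c \<rho>) (sphere c \<rho>) R"
    unfolding retraction_def
  proof (intro conjI)
    show "continuous_on (cball c \<rho>) R"
      unfolding R_def using avoid by (intro continuous_intros cont) auto
    show "R \<in> cball c \<rho> \<rightarrow> sphere c \<rho>"
      using avoid \<open>\<rho> > 0\<close> by (auto simp: R_def dist_norm)
    show "\<forall>v\<in>sphere c \<rho>. R v = v"
      using fixed \<open>\<rho> > 0\<close> by (auto simp: R_def dist_norm norm_minus_commute)
  qed auto
  then have "frontier (cball c \<rho>) retract_of cball c \<rho>"
    using \<open>\<rho> > 0\<close> by (auto simp: retract_of_def)
  then show False using no_retraction_cball[OF \<open>\<rho> > 0\<close>] by blast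
qed

lemma radial_reparametrisation_mem:
  fixes c v :: "'b::real_normed_vector"
  assumes "\<rho> > 0" "0 \<le> t" "\<rho> / 2 \<le> norm (v - c)" "norm (v - c) \<le> \<rho>"
  shows "t * (2 - 2 * norm (v - c) / \<rho>) \<in> {0..t}"
    and "c + (\<rho> / norm (v - c)) *\<^sub>R (v - c) \<in> sphere c \<rho>"
proof -
  have "1 \<le> 2 * norm (v - c) / \<rho>" "2 * norm (v - c) / \<rho> \<le> 2"
    using assms by (simp_all add: divide_simps)
  then show "t * (2 - 2 * norm (v - c) / \<rho>) \<in> {0..t}"
    using \<open>0 \<le> t\<close> by (auto intro: mult_left_le)
  show "c + (\<rho> / norm (v - c)) *\<^sub>R (v - c) \<in> sphere c \<rho>"
    using assms by (auto simp: dist_norm)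
qed

text \<open>Run the homotopy radially: the inner half ball sees the end map F(t, -), the outer annulus
  sees F at time decreasing from t to 0 on the boundary sphere.\<close>
lemma continuous_on_homotopy_cone:
  fixes F :: "real \<times> 'b::euclidean_space \<Rightarrow> 'b"
  assumes "\<rho> > 0" "0 \<le> t" and contF: "continuous_on ({0..t} \<times> cball c \<rho>) F"
  shows "continuous_on (cball c \<rho>) (\<lambda>v. if norm (v - c) \<le> \<rho> / 2 then F (t, c + 2 *\<^sub>R (v - c))
           else F (t * (2 - 2 * norm (v - c) / \<rho>), c + (\<rho> / norm (v - c)) *\<^sub>R (v - c)))"
proof -
  define inner where "inner = cball c (\<rho> / 2)"
  define outer where "outer = cball c \<rho> \<inter> {v. \<rho> / 2 \<le> norm (v - c)}"
  have "continuous_on inner (\<lambda>v. F (t, c + 2 *\<^sub>R (v - c)))"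
  proof (rule continuous_on_compose2[OF contF])
    show "(\<lambda>v. (t, c + 2 *\<^sub>R (v - c))) ` inner \<subseteq> {0..t} \<times> cball c \<rho>"
      using \<open>0 \<le> t\<close> by (auto simp: inner_def dist_norm norm_minus_commute)
  qed (intro continuous_intros)
  moreover have "continuous_on outer
      (\<lambda>v. F (t * (2 - 2 * norm (v - c) / \<rho>), c + (\<rho> / norm (v - c)) *\<^sub>R (v - c)))"
  proof (rule continuous_on_compose2[OF contF])
    show "continuous_on outer (\<lambda>v. (t * (2 - 2 * norm (v - c) / \<rho>), c + (\<rho> / norm (v - c)) *\<^sub>R (v - c)))"
      using \<open>\<rho> > 0\<close> by (intro continuous_intros) (auto simp: outer_def)
    show "(\<lambda>v. (t * (2 - 2 * norm (v - c) / \<rho>), c + (\<rho> / norm (v - c)) *\<^sub>R (v - c))) ` outer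
        \<subseteq> {0..t} \<times> cball c \<rho>"
    proof (rule image_subsetI)
      fix v assume "v \<in> outer"
      then have "\<rho> / 2 \<le> norm (v - c)" "norm (v - c) \<le> \<rho>"
        by (auto simp: outer_def dist_norm norm_minus_commute)
      from radial_reparametrisation_mem[OF assms(1,2) this]
      show "(t * (2 - 2 * norm (v - c) / \<rho>), c + (\<rho> / norm (v - c)) *\<^sub>R (v - c))
          \<in> {0..t} \<times> cball c \<rho>" by auto
    qed
  qed
  moreover have "closed outer"
    unfolding outer_def by (intro closed_Int closed_Collect_le continuous_intros) auto
  moreover have "F (t, c + 2 *\<^sub>R (v - c))
      = F (t * (2 - 2 * norm (v - c) / \<rho>), c + (\<rho> / norm (v - c)) *\<^sub>R (v - c))"
    if "v \<in> inner \<and> \<not> norm (v - c) \<le> \<rho> / 2 \<or> v \<in> outer \<and> norm (v - c) \<le> \<rho> / 2" for v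
  proof -
    have "norm (v - c) = \<rho> / 2"
      using that by (auto simp: inner_def outer_def dist_norm norm_minus_commute)
    then have "\<rho> / norm (v - c) = 2" "2 * norm (v - c) / \<rho> = 1" using \<open>\<rho> > 0\<close> by auto
    then show ?thesis by (simp only:) simp
  qed
  ultimately have "continuous_on (inner \<union> outer) (\<lambda>v. if norm (v - c) \<le> \<rho> / 2
      then F (t, c + 2 *\<^sub>R (v - c))
      else F (t * (2 - 2 * norm (v - c) / \<rho>), c + (\<rho> / norm (v - c)) *\<^sub>R (v - c)))"
    by (intro continuous_on_cases) (auto simp: inner_def)
  moreover have "inner \<union> outer = cball c \<rho>"
    using \<open>\<rho> > 0\<close> by (auto simp: inner_def outer_def dist_norm norm_minus_commute)
  ultimately show ?thesis by simp
qed

lemma sphere_homotopy_hits_centre: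
  fixes F :: "real \<times> 'b::euclidean_space \<Rightarrow> 'b"
  assumes "\<rho> > 0" "0 \<le> t" and contF: "continuous_on ({0..t} \<times> cball c \<rho>) F"
    and F0: "\<And>v. v \<in> sphere c \<rho> \<Longrightarrow> F (0, v) = v"
  shows "\<exists>s\<in>{0..t}. \<exists>v\<in>cball c \<rho>. F (s, v) = c \<and> (v \<in> sphere c \<rho> \<or> s = t)"
proof -
  let ?\<Phi> = "\<lambda>v. if norm (v - c) \<le> \<rho> / 2 then F (t, c + 2 *\<^sub>R (v - c))
           else F (t * (2 - 2 * norm (v - c) / \<rho>), c + (\<rho> / norm (v - c)) *\<^sub>R (v - c))"
  have "?\<Phi> v = v" if "v \<in> sphere c \<rho>" for v
    using that F0 \<open>\<rho> > 0\<close> by (auto simp: dist_norm norm_minus_commute)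
  then obtain v where v: "v \<in> cball c \<rho>" "?\<Phi> v = c"
    using sphere_fixing_map_hits_centre[OF \<open>\<rho> > 0\<close> continuous_on_homotopy_cone[OF assms(1-3)]]
    by blast
  show ?thesis
  proof (cases "norm (v - c) \<le> \<rho> / 2")
    case True
    then have "c + 2 *\<^sub>R (v - c) \<in> cball c \<rho>" by (simp add: dist_norm)
    with True v \<open>0 \<le> t\<close> show ?thesis by (intro bexI[of _ t] bexI[of _ "c + 2 *\<^sub>R (v - c)"]) auto
  next
    case False
    then have "\<rho> / 2 \<le> norm (v - c)" by simp
    moreover have "norm (v - c) \<le> \<rho>" using v(1) by (simp add: dist_norm norm_minus_commute)
    ultimately have "t * (2 - 2 * norm (v - c) / \<rho>) \<in> {0..t}"
      "c + (\<rho> / norm (v - c)) *\<^sub>R (v - c) \<in> sphere c \<rho>"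
      by (rule radial_reparametrisation_mem[OF assms(1,2)])+
    with False v show ?thesis
      by (intro bexI[of _ "t * (2 - 2 * norm (v - c) / \<rho>)"]
          bexI[of _ "c + (\<rho> / norm (v - c)) *\<^sub>R (v - c)"]) auto
  qed
qed

lemma topological_manifold_chart_ball:
  fixes S :: "'a::metric_space set" and y :: 'a
  assumes man: "topological_manifold S TYPE('n::finite)" and "open S" "y \<in> S" "\<epsilon> > 0"
  obtains W \<phi> e and \<psi> :: "real ^ 'n \<Rightarrow> 'a"
  where "open W" "y \<in> W" "W \<subseteq> S \<inter> ball y \<epsilon>" "e > 0" "homeomorphism W (ball (\<phi> y) e) \<phi> \<psi>"
proof -
  obtain U and V :: "(real ^ 'n) set" where U: "openin (top_of_set S) U" "y \<in> U"
    and "open V" and "U homeomorphic V"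
    using man \<open>y \<in> S\<close> unfolding topological_manifold_def by blast
  then obtain \<phi> \<psi> where hom: "homeomorphism U V \<phi> \<psi>" by (auto simp: homeomorphic_def)
  have "open U" using U(1) \<open>open S\<close> openin_open_trans by blast
  define U' where "U' = U \<inter> ball y \<epsilon>"
  have "openin (top_of_set V) (\<phi> ` U')"
    using \<open>open U\<close> by (intro homeomorphism_imp_open_map[OF hom]) (auto simp: U'_def openin_open_Int)
  then have "open (\<phi> ` U')" using \<open>open V\<close> openin_open_trans by blast
  moreover have "\<phi> y \<in> \<phi> ` U'" using U(2) \<open>\<epsilon> > 0\<close> by (auto simp: U'_def)
  ultimately obtain e where "e > 0" and e: "ball (\<phi> y) e \<subseteq> \<phi> ` U'"
    using open_contains_ball by blast
  define W where "W = \<psi> ` ball (\<phi> y) e"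
  have "\<phi> ` U' \<subseteq> V" "\<psi> ` \<phi> ` U' = U'"
    using hom by (auto simp: U'_def homeomorphism_def image_comp)
  then have WU': "W \<subseteq> U'" and ballV: "ball (\<phi> y) e \<subseteq> V"
    using image_mono[OF e, of \<psi>] e by (auto simp: W_def)
  have homW: "homeomorphism W (ball (\<phi> y) e) \<phi> \<psi>"
    using homeomorphism_of_subsets[OF homeomorphism_symD[OF hom] ballV, of W] WU'
    by (auto simp: W_def U'_def intro: homeomorphism_symD)
  have "openin (top_of_set U) W"
    unfolding W_def
    by (intro homeomorphism_imp_open_map[OF homeomorphism_symD[OF hom]])
      (use ballV in \<open>auto intro: open_subset\<close>)
  then have "open W" using \<open>open U\<close> openin_open_trans by blast
  moreover have "y \<in> W"
    using hom U(2) \<open>e > 0\<close> by (force simp: W_def homeomorphism_def)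
  moreover have "W \<subseteq> S \<inter> ball y \<epsilon>"
    using WU' openin_subset[OF U(1)] by (auto simp: U'_def)
  ultimately show thesis using that \<open>e > 0\<close> homW by blast
qed

lemma topological_manifold_has_other_point:
  fixes S :: "'a::metric_space set"
  assumes "topological_manifold S TYPE('n::finite)" "open S" "x \<in> S"
  obtains w where "w \<in> S" "w \<noteq> x"
proof -
  obtain W \<phi> e and \<psi> :: "real ^ 'n \<Rightarrow> 'a"
    where "open W" "x \<in> W" "W \<subseteq> S \<inter> ball x 1" "e > 0" and hom: "homeomorphism W (ball (\<phi> x) e) \<phi> \<psi>"
    by (rule topological_manifold_chart_ball[OF assms zero_less_one])
  have "W \<noteq> {x}"
  proof
    assume "W = {x}"
    then have "ball (\<phi> x) e = {\<phi> x}" using homeomorphism_image1[OF hom] by simp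
    then show False using not_open_singleton[of "\<phi> x"] open_ball[of "\<phi> x" e] by simp
  qed
  then obtain w where "w \<in> W" "w \<noteq> x" using \<open>x \<in> W\<close> by blast
  then show thesis using that \<open>W \<subseteq> S \<inter> ball x 1\<close> by blast
qed

lemma compact_subset_open_uniform_margin:
  fixes C U :: "'a::metric_space set" and a :: 'a
  assumes "compact C" "open U" "C \<subseteq> U"
  obtains t where "0 < t" "t \<le> 1" "\<And>z w. z \<in> C \<Longrightarrow> dist z w \<le> t * dist z a \<Longrightarrow> w \<in> U"
proof -
  obtain \<delta> where "\<delta> > 0" and \<delta>: "\<And>z. z \<in> C \<Longrightarrow> ball z \<delta> \<subseteq> U"
    using Heine_Borel_lemma[OF \<open>compact C\<close>, of "{U}"] assms by auto
  obtain B0 where B0: "\<And>z. z \<in> C \<Longrightarrow> dist a z \<le> B0"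
    using compact_imp_bounded[OF \<open>compact C\<close>] by (auto simp: bounded_any_center[of _ a])
  define B where "B = max 1 B0"
  have "B > 0" and B: "\<And>z. z \<in> C \<Longrightarrow> dist z a \<le> B"
    using B0 by (force simp: B_def dist_commute)+
  define t where "t = min 1 (\<delta> / (2 * B))"
  show thesis
  proof
    show "0 < t" "t \<le> 1" using \<open>\<delta> > 0\<close> \<open>B > 0\<close> by (auto simp: t_def)
    fix z w assume z: "z \<in> C" and w: "dist z w \<le> t * dist z a"
    have "t * dist z a \<le> \<delta> / (2 * B) * B"
      using B[OF z] \<open>\<delta> > 0\<close> \<open>B > 0\<close> by (intro mult_mono) (auto simp: t_def)
    also have "\<dots> < \<delta>" using \<open>\<delta> > 0\<close> \<open>B > 0\<close> by simp
    finally show "w \<in> U" using \<delta>[OF z] w by auto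
  qed
qed

section \<open>Continuing a geodesic inside a manifold ball\<close>

text \<open>The graph of F is closed because, in a CAT space, a point is determined by its distances
  to the two ends of a short segment; a closed graph with compact range forces continuity.\<close>
lemma continuous_on_chart_contraction:
  fixes F :: "real \<times> 'b::euclidean_space \<Rightarrow> 'b" and \<psi> :: "'b \<Rightarrow> 'a::metric_space"
  assumes cat: "CAT \<kappa> TYPE('a)"
    and "closed V" "compact K" "V \<subseteq> K" and \<psi>: "continuous_on K \<psi>" "inj_on \<psi> K"
    and short: "\<And>v. v \<in> V \<Longrightarrow> ereal (dist (\<psi> v) x0) < pi_kappa \<kappa>"
    and FK: "F \<in> {0..t} \<times> V \<rightarrow> K"
    and between: "\<And>s v. s \<in> {0..t} \<Longrightarrow> v \<in> V \<Longrightarrow>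
        dist (\<psi> v) (\<psi> (F (s, v))) = s * dist (\<psi> v) x0 \<and>
        dist (\<psi> (F (s, v))) x0 = (1 - s) * dist (\<psi> v) x0"
  shows "continuous_on ({0..t} \<times> V) F"
proof (rule continuous_from_closed_graph[OF \<open>compact K\<close> FK])
  define Q where "Q w = (dist (\<psi> (snd (fst w))) (\<psi> (snd w)) - fst (fst w) * dist (\<psi> (snd (fst w))) x0,
      dist (\<psi> (snd w)) x0 - (1 - fst (fst w)) * dist (\<psi> (snd (fst w))) x0)"
    for w :: "(real \<times> 'b) \<times> 'b"
  let ?D = "({0..t} \<times> V) \<times> K"
  have "continuous_on ?D (\<lambda>w. \<psi> (snd (fst w)))"
    by (rule continuous_on_compose2[OF \<psi>(1)]) (use \<open>V \<subseteq> K\<close> in \<open>auto intro!: continuous_intros\<close>)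
  moreover have "continuous_on ?D (\<lambda>w. \<psi> (snd w))"
    by (rule continuous_on_compose2[OF \<psi>(1)]) (auto intro!: continuous_intros)
  ultimately have "continuous_on ?D Q"
    unfolding Q_def by (intro continuous_intros)
  moreover have "closed ?D"
    using \<open>closed V\<close> compact_imp_closed[OF \<open>compact K\<close>] by (intro closed_Times closed_atLeastAtMost)
  ultimately have "closed {w \<in> ?D. Q w = (0, 0)}"
    by (rule continuous_closed_preimage_constant)
  moreover have "(\<lambda>x. (x, F x)) ` ({0..t} \<times> V) = {w \<in> ?D. Q w = (0, 0)}"
  proof (intro equalityI subsetI)
    fix w assume "w \<in> (\<lambda>x. (x, F x)) ` ({0..t} \<times> V)"
    then show "w \<in> {w \<in> ?D. Q w = (0, 0)}"
      using FK between by (force simp: Q_def)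
  next
    fix w assume w: "w \<in> {w \<in> ?D. Q w = (0, 0)}"
    obtain s v u where suv: "w = ((s, v), u)" by (metis prod.collapse)
    have s: "s \<in> {0..t}" "v \<in> V" "u \<in> K" using w suv by auto
    have "\<psi> u = \<psi> (F (s, v))"
      using between[OF s(1,2)] w suv short[OF s(2)]
      by (intro CAT_between_unique[OF cat, where x = "\<psi> v" and z = x0]) (auto simp: Q_def algebra_simps)
    then have "u = F (s, v)"
      using \<psi>(2) FK s by (auto dest: inj_onD)
    then show "w \<in> (\<lambda>x. (x, F x)) ` ({0..t} \<times> V)" using suv s by auto
  qed
  ultimately show "closed ((\<lambda>x. (x, F x)) ` ({0..t} \<times> V))" by simp
qed

text \<open>Contract a chart ball around c towards x0, moving each point a fixed fraction of the way
  along the geodesic to x0; fractions are kept so small that the contracted points stay inside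
  the chart.\<close>
lemma CAT_chart_contraction:
  fixes x0 :: "'a::metric_space" and \<psi> :: "'b::euclidean_space \<Rightarrow> 'a"
  assumes cat: "CAT \<kappa> TYPE('a)" and hom: "homeomorphism W (ball c e) \<phi> \<psi>" and "open W" "e > 0"
    and short: "\<And>w. w \<in> W \<Longrightarrow> ereal (dist w x0) < pi_kappa \<kappa>"
  obtains \<rho> t F where "0 < \<rho>" "\<rho> < e" "0 < t" "t \<le> 1"
    "continuous_on ({0..t} \<times> cball c \<rho>) F" "\<forall>v\<in>sphere c \<rho>. F (0, v) = v"
    "\<forall>s\<in>{0..t}. \<forall>v\<in>cball c \<rho>.
       dist (\<psi> v) (\<psi> (F (s, v))) = s * dist (\<psi> v) x0 \<and> dist (\<psi> (F (s, v))) x0 = (1 - s) * dist (\<psi> v) x0"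
proof -
  define \<rho> where "\<rho> = e / 3"
  have "\<rho> > 0" "\<rho> < e" and Ke: "cball c (2 * \<rho>) \<subseteq> ball c e" using \<open>e > 0\<close> by (auto simp: \<rho>_def)
  note \<phi>\<psi> = homeomorphism_apply2[OF hom] and \<psi>W = homeomorphism_image2[OF hom]
    and cont\<psi> = homeomorphism_cont2[OF hom]
  define U where "U = \<psi> ` ball c (2 * \<rho>)"
  have "openin (top_of_set W) U"
    unfolding U_def using \<open>\<rho> > 0\<close> \<open>e > 0\<close>
    by (intro homeomorphism_imp_open_map[OF homeomorphism_symD[OF hom]])
      (auto intro: open_subset simp: \<rho>_def)
  then have "open U" using \<open>open W\<close> openin_open_trans by blast
  have compact: "compact (\<psi> ` cball c \<rho>)"
    using \<open>\<rho> > 0\<close> Ke by (intro compact_continuous_image continuous_on_subset[OF cont\<psi>]) auto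
  have "\<psi> ` cball c \<rho> \<subseteq> U" using \<open>\<rho> > 0\<close> by (auto simp: U_def)
  then obtain t where "0 < t" "t \<le> 1"
    and margin: "\<And>z w. z \<in> \<psi> ` cball c \<rho> \<Longrightarrow> dist z w \<le> t * dist z x0 \<Longrightarrow> w \<in> U"
    using compact_subset_open_uniform_margin[OF compact \<open>open U\<close>, where a = x0] by blast
  obtain \<gamma> where \<gamma>: "\<And>z. geodesic_path z x0 (\<gamma> z)"
    using choice[of "\<lambda>z g. geodesic_path z x0 g"] CAT_geodesic_path_exists[OF cat] by blast
  define H where "H s z = \<gamma> z (s * dist z x0)" for s z
  have Hdist: "dist z (H s z) = s * dist z x0" "dist (H s z) x0 = (1 - s) * dist z x0"
    if "0 \<le> s" "s \<le> 1" for s z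
    using geodesic_path_point_dist[OF \<gamma> that] by (simp_all add: H_def)
  define F where "F w = \<phi> (H (fst w) (\<psi> (snd w)))" for w :: "real \<times> 'b"
  have F: "F (s, v) \<in> cball c (2 * \<rho>)" "\<psi> (F (s, v)) = H s (\<psi> v)"
    if "s \<in> {0..t}" "v \<in> cball c \<rho>" for s v
  proof -
    have "dist (\<psi> v) (H s (\<psi> v)) \<le> t * dist (\<psi> v) x0"
      using Hdist(1) that \<open>t \<le> 1\<close> by (simp add: mult_right_mono)
    then have "H s (\<psi> v) \<in> U" using margin that by blast
    then obtain u where u: "u \<in> ball c (2 * \<rho>)" "H s (\<psi> v) = \<psi> u" by (auto simp: U_def)
    then have "\<phi> (\<psi> u) = u" using \<phi>\<psi> Ke by (meson ball_subset_cball subsetD)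
    then show "F (s, v) \<in> cball c (2 * \<rho>)" "\<psi> (F (s, v)) = H s (\<psi> v)"
      using u by (auto simp: F_def)
  qed
  have between: "dist (\<psi> v) (\<psi> (F (s, v))) = s * dist (\<psi> v) x0 \<and>
      dist (\<psi> (F (s, v))) x0 = (1 - s) * dist (\<psi> v) x0"
    if "s \<in> {0..t}" "v \<in> cball c \<rho>" for s v
    using F(2)[OF that] Hdist[of s "\<psi> v"] that \<open>t \<le> 1\<close> by simp
  have "continuous_on ({0..t} \<times> cball c \<rho>) F"
  proof (rule continuous_on_chart_contraction[OF cat closed_cball compact_cball _ _ _ _ _ between])
    show "cball c \<rho> \<subseteq> cball c (2 * \<rho>)" using \<open>\<rho> > 0\<close> by auto
    show "continuous_on (cball c (2 * \<rho>)) \<psi>" using continuous_on_subset[OF cont\<psi> Ke] .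
    show "inj_on \<psi> (cball c (2 * \<rho>))" using \<phi>\<psi> Ke by (metis inj_on_def subsetD)
    show "ereal (dist (\<psi> v) x0) < pi_kappa \<kappa>" if "v \<in> cball c \<rho>" for v
    proof (rule short)
      show "\<psi> v \<in> W" using that \<open>\<rho> < e\<close> \<psi>W by auto
    qed
    show "F \<in> {0..t} \<times> cball c \<rho> \<rightarrow> cball c (2 * \<rho>)" using F(1) by auto
  qed
  moreover have "\<forall>v\<in>sphere c \<rho>. F (0, v) = v"
    using \<open>\<rho> < e\<close> \<phi>\<psi> Hdist(1)[of 0] by (simp add: F_def)
  moreover have "\<forall>s\<in>{0..t}. \<forall>v\<in>cball c \<rho>. dist (\<psi> v) (\<psi> (F (s, v))) = s * dist (\<psi> v) x0 \<and>
      dist (\<psi> (F (s, v))) x0 = (1 - s) * dist (\<psi> v) x0"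
    using between by blast
  ultimately show thesis by (rule that[OF \<open>0 < \<rho>\<close> \<open>\<rho> < e\<close> \<open>0 < t\<close> \<open>t \<le> 1\<close>])
qed

text \<open>If no point of the chart had y between itself and x0, the contraction would be a homotopy
  of the chart sphere avoiding c = \<phi> y and ending in a map of the ball avoiding c.\<close>
lemma CAT_chart_point_beyond:
  fixes x0 :: "'a::metric_space" and \<psi> :: "'b::euclidean_space \<Rightarrow> 'a"
  assumes cat: "CAT \<kappa> TYPE('a)" and hom: "homeomorphism W (ball c e) \<phi> \<psi>" and "open W" "e > 0"
    and short: "\<And>w. w \<in> W \<Longrightarrow> ereal (dist w x0) < pi_kappa \<kappa>" and "\<psi> c \<noteq> x0"
  obtains z where "z \<in> W" "z \<noteq> \<psi> c" "dist x0 (\<psi> c) + dist (\<psi> c) z = dist x0 z"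
proof -
  obtain \<rho> t F where "0 < \<rho>" "\<rho> < e" "0 < t" "t \<le> 1"
    and contF: "continuous_on ({0..t} \<times> cball c \<rho>) F" and F0: "\<forall>v\<in>sphere c \<rho>. F (0, v) = v"
    and between: "\<forall>s\<in>{0..t}. \<forall>v\<in>cball c \<rho>.
       dist (\<psi> v) (\<psi> (F (s, v))) = s * dist (\<psi> v) x0 \<and> dist (\<psi> (F (s, v))) x0 = (1 - s) * dist (\<psi> v) x0"
    by (rule CAT_chart_contraction[OF cat hom \<open>open W\<close> \<open>e > 0\<close> short])
  have "\<exists>s\<in>{0..t}. \<exists>v\<in>cball c \<rho>. F (s, v) = c \<and> (v \<in> sphere c \<rho> \<or> s = t)"
    using \<open>\<rho> > 0\<close> \<open>0 < t\<close> contF F0 by (intro sphere_homotopy_hits_centre) auto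
  then obtain s v where sv: "s \<in> {0..t}" "v \<in> cball c \<rho>" "F (s, v) = c"
    and "v \<in> sphere c \<rho> \<or> s = t"
    by blast
  have v: "v \<in> ball c e" using sv(2) \<open>\<rho> < e\<close> by simp
  have d: "dist (\<psi> v) (\<psi> c) = s * dist (\<psi> v) x0" "dist (\<psi> c) x0 = (1 - s) * dist (\<psi> v) x0"
    using bspec[OF bspec[OF between sv(1)] sv(2)] unfolding sv(3) by auto
  have "\<psi> v \<noteq> \<psi> c"
  proof
    assume "\<psi> v = \<psi> c"
    have "v = \<phi> (\<psi> v)" using homeomorphism_apply2[OF hom v] by simp
    also have "\<dots> = \<phi> (\<psi> c)" using \<open>\<psi> v = \<psi> c\<close> by simp
    also have "\<dots> = c" using homeomorphism_apply2[OF hom] \<open>e > 0\<close> by simp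
    finally have "v = c" .
    then have "s = t" using \<open>v \<in> sphere c \<rho> \<or> s = t\<close> \<open>\<rho> > 0\<close> by auto
    then show False using d(1) \<open>\<psi> v = \<psi> c\<close> \<open>0 < t\<close> \<open>\<psi> c \<noteq> x0\<close> by simp
  qed
  moreover have "\<psi> v \<in> W" using homeomorphism_image2[OF hom] v by blast
  moreover have "dist x0 (\<psi> c) + dist (\<psi> c) (\<psi> v) = dist x0 (\<psi> v)"
    using d sv(1) \<open>t \<le> 1\<close> by (simp add: dist_commute algebra_simps)
  ultimately show thesis using that by blast
qed

lemma CAT_manifold_local_extension:
  fixes p x0 y :: "'a::metric_space"
  assumes cat: "CAT \<kappa> TYPE('a)" and rk: "ereal r < pi_kappa \<kappa> / 2"
    and man: "topological_manifold (ball p r) TYPE('n::finite)"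
    and x0: "dist p x0 \<le> r" and y: "y \<in> ball p r" and "y \<noteq> x0" and "\<epsilon> > 0"
  obtains z where "z \<noteq> y" "dist y z < \<epsilon>" "dist x0 y + dist y z = dist x0 z"
proof -
  obtain W \<phi> e and \<psi> :: "real ^ 'n \<Rightarrow> 'a"
    where "open W" "y \<in> W" and W: "W \<subseteq> ball p r \<inter> ball y \<epsilon>" and "e > 0"
      and hom: "homeomorphism W (ball (\<phi> y) e) \<phi> \<psi>"
    by (rule topological_manifold_chart_ball[OF man open_ball y \<open>\<epsilon> > 0\<close>])
  have "\<psi> (\<phi> y) = y" by (rule homeomorphism_apply1[OF hom \<open>y \<in> W\<close>])
  have short: "ereal (dist w x0) < pi_kappa \<kappa>" if "w \<in> W" for w
  proof (rule diameter_less_pi_kappa[OF rk])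
    show "dist w x0 \<le> 2 * r" using that W x0 dist_triangle3[of w x0 p] by auto
  qed
  have "\<psi> (\<phi> y) \<noteq> x0" using \<open>y \<noteq> x0\<close> \<open>\<psi> (\<phi> y) = y\<close> by simp
  then obtain z where "z \<in> W" "z \<noteq> \<psi> (\<phi> y)" "dist x0 (\<psi> (\<phi> y)) + dist (\<psi> (\<phi> y)) z = dist x0 z"
    using CAT_chart_point_beyond[OF cat hom \<open>open W\<close> \<open>e > 0\<close> short] by blast
  then show thesis using that W \<open>\<psi> (\<phi> y) = y\<close> by auto
qed

section \<open>Extending up to the sphere\<close>

definition geodesic_extension_within :: "'a::metric_space set \<Rightarrow> real \<Rightarrow> (real \<Rightarrow> 'a) \<Rightarrow> real \<Rightarrow> (real \<Rightarrow> 'a) \<Rightarrow> bool"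
  where "geodesic_extension_within S L h b f \<longleftrightarrow>
    L \<le> b \<and> geodesic_on {0..b} f \<and> (\<forall>s\<in>{0..L}. f s = h s) \<and> f ` {L..b} \<subseteq> S"

lemma geodesic_extension_within_length:
  assumes "geodesic_extension_within (cball p r) L h b f" "0 \<le> L" "dist p (h 0) \<le> r"
  shows "b \<le> 2 * r"
proof -
  have "L \<le> b" "f ` {L..b} \<subseteq> cball p r" "dist (h 0) (f b) = b"
    using assms geodesic_onD[of "{0..b}" f 0 b] by (auto simp: geodesic_extension_within_def)
  moreover have "dist p (f b) \<le> r" using calculation(1,2) by (auto simp: image_subset_iff)
  ultimately show ?thesis using assms(3) dist_triangle3[of "h 0" "f b" p] by linarith
qed

lemma CAT_geodesic_prefix:
  fixes f :: "real \<Rightarrow> 'a::metric_space"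
  assumes cat: "CAT \<kappa> TYPE('a)" and f: "geodesic_on {0..b} f" "0 \<le> b"
    and \<gamma>: "geodesic_path (f 0) z \<gamma>" and short: "ereal (dist (f 0) z) < pi_kappa \<kappa>"
    and between: "dist (f 0) (f b) + dist (f b) z = dist (f 0) z"
    and s: "s \<in> {0..b}"
  shows "f s = \<gamma> s"
proof -
  have "dist (f 0) (f s) = s" "dist (f s) (f b) = b - s"
    using geodesic_onD[OF f(1), of 0 s] geodesic_onD[OF f(1), of s b] s by auto
  moreover have "dist (f 0) (f b) = b" using geodesic_onD[OF f(1), of 0 b] f(2) by simp
  ultimately have "dist (f 0) (f s) + dist (f s) z = dist (f 0) z"
    using between dist_triangle[of "f s" z "f b"] dist_triangle[of "f 0" z "f s"] by linarith
  then have "f s = \<gamma> (dist (f 0) (f s))" by (rule CAT_between_on_geodesic[OF cat \<gamma> _ short])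
  then show ?thesis using \<open>dist (f 0) (f s) = s\<close> by simp
qed

lemma CAT_geodesic_extension_step:
  fixes p :: "'a::metric_space"
  assumes cat: "CAT \<kappa> TYPE('a)" and rk: "ereal r < pi_kappa \<kappa> / 2"
    and man: "topological_manifold (ball p r) TYPE('n::finite)"
    and ext: "geodesic_extension_within (cball p r) L h b f" and "0 < L"
    and h0: "dist p (h 0) \<le> r" and fb: "f b \<in> ball p r"
  shows "\<exists>b' f'. geodesic_extension_within (cball p r) L h b' f' \<and> b < b' \<and> (\<forall>s\<in>{0..b}. f' s = f s)"
proof -
  have "L \<le> b" and f: "geodesic_on {0..b} f" and fh: "\<forall>s\<in>{0..L}. f s = h s"
    and fS: "f ` {L..b} \<subseteq> cball p r"
    using ext by (auto simp: geodesic_extension_within_def)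
  have "f 0 = h 0" using fh \<open>0 < L\<close> by simp
  then have x0y: "dist (h 0) (f b) = b" using geodesic_onD[OF f, of 0 b] \<open>0 < L\<close> \<open>L \<le> b\<close> by simp
  then have "f b \<noteq> h 0" using \<open>0 < L\<close> \<open>L \<le> b\<close> by auto
  obtain z where "z \<noteq> f b" and yz: "dist (f b) z < r - dist p (f b)"
    and between: "dist (h 0) (f b) + dist (f b) z = dist (h 0) z"
    using CAT_manifold_local_extension[OF cat rk man h0 fb \<open>f b \<noteq> h 0\<close>, of "r - dist p (f b)"] fb
    by auto
  obtain \<gamma> where \<gamma>: "geodesic_path (h 0) z \<gamma>" using CAT_geodesic_path_exists[OF cat] by blast
  define D where "D = dist (h 0) z"
  have "dist (f b) z > 0" using \<open>z \<noteq> f b\<close> by simp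
  then have "b < D" using between x0y unfolding D_def by linarith
  have "dist p z < r" using yz dist_triangle[of p z "f b"] by simp
  then have short: "ereal (dist (h 0) z) < pi_kappa \<kappa>"
    using h0 dist_triangle3[of "h 0" z p] by (intro diameter_less_pi_kappa[OF rk]) simp
  have \<gamma>D: "geodesic_on {0..D} \<gamma>"
    using \<gamma> by (auto simp: geodesic_path_iff_geodesic_on D_def)
  have f\<gamma>: "f s = \<gamma> s" if "s \<in> {0..b}" for s
    using CAT_geodesic_prefix[OF cat f _ _ _ _ that] \<gamma> short between \<open>f 0 = h 0\<close> \<open>0 < L\<close> \<open>L \<le> b\<close>
    by simp
  define f' where "f' s = (if s \<le> b then f s else \<gamma> s)" for s
  have "geodesic_extension_within (cball p r) L h D f'"
    unfolding geodesic_extension_within_def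
  proof (intro conjI ballI subsetI)
    show "L \<le> D" using \<open>L \<le> b\<close> \<open>b < D\<close> by simp
    have "f' s = \<gamma> s" if "s \<in> {0..D}" for s using that f\<gamma> by (simp add: f'_def)
    then show "geodesic_on {0..D} f'" using \<gamma>D by (simp add: geodesic_on_def)
    show "f' s = h s" if "s \<in> {0..L}" for s using that fh \<open>L \<le> b\<close> by (simp add: f'_def)
    fix w assume "w \<in> f' ` {L..D}"
    then obtain s where s: "s \<in> {L..D}" "w = f' s" by blast
    show "w \<in> cball p r"
    proof (cases "s \<le> b")
      case True then show ?thesis using fS s by (auto simp: f'_def image_subset_iff)
    next
      case False
      have "dist (f b) (\<gamma> s) = s - b"
        using geodesic_onD[OF \<gamma>D, of b s] f\<gamma>[of b] False s \<open>0 < L\<close> \<open>L \<le> b\<close> by simp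
      also have "\<dots> \<le> dist (f b) z" using between x0y s by (simp add: D_def)
      finally show ?thesis
        using yz dist_triangle[of p "\<gamma> s" "f b"] False s by (simp add: f'_def)
    qed
  qed
  moreover have "\<forall>s\<in>{0..b}. f' s = f s" by (simp add: f'_def)
  ultimately show ?thesis using \<open>b < D\<close> by blast
qed

text \<open>Extensions are compared through their graphs, so that inclusion is the extension order
  and Zorn's lemma applies.\<close>
definition geodesic_extension_graphs :: "'a::metric_space set \<Rightarrow> real \<Rightarrow> (real \<Rightarrow> 'a) \<Rightarrow> (real \<times> 'a) set set"
  where "geodesic_extension_graphs S L h =
    {(\<lambda>s. (s, f s)) ` {0..b} | b f. geodesic_extension_within S L h b f}"

lemma graph_memD: "(s, w) \<in> (\<lambda>s. (s, f s)) ` S \<Longrightarrow> s \<in> S \<and> w = f s"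
  by auto

lemma geodesic_extension_graphs_chain_union:
  fixes p :: "'a::metric_space"
  assumes C: "C \<in> chains (geodesic_extension_graphs (cball p r) L h)" and "0 \<le> L" "dist p (h 0) \<le> r"
  shows "\<And>s w s' w'. (s, w) \<in> \<Union>C \<Longrightarrow> (s', w') \<in> \<Union>C \<Longrightarrow> dist w w' = \<bar>s - s'\<bar>"
    and "\<And>s w. (s, w) \<in> \<Union>C \<Longrightarrow> s \<in> {0..2 * r} \<and> (s \<le> L \<longrightarrow> w = h s) \<and> (L \<le> s \<longrightarrow> w \<in> cball p r)"
    and "\<And>s s' w'. (s', w') \<in> \<Union>C \<Longrightarrow> s \<in> {0..s'} \<Longrightarrow> \<exists>w. (s, w) \<in> \<Union>C"
    and "\<And>X. X \<in> C \<Longrightarrow> \<exists>w. (L, w) \<in> X"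
proof -
  have member: "\<exists>b f. geodesic_extension_within (cball p r) L h b f \<and> X = (\<lambda>s. (s, f s)) ` {0..b}"
    if "X \<in> C" for X
    using chainsD2[OF C] that unfolding geodesic_extension_graphs_def by blast
  show "dist w w' = \<bar>s - s'\<bar>" if sw: "(s, w) \<in> \<Union>C" "(s', w') \<in> \<Union>C" for s w s' w'
  proof -
    obtain X where X: "X \<in> C" "(s, w) \<in> X" "(s', w') \<in> X"
      using sw chainsD[OF C] by blast
    obtain b f where "geodesic_extension_within (cball p r) L h b f"
      and Xbf: "X = (\<lambda>s. (s, f s)) ` {0..b}"
      using member[OF X(1)] by blast
    then have "geodesic_on {0..b} f" by (simp add: geodesic_extension_within_def)
    moreover have "s \<in> {0..b} \<and> w = f s" "s' \<in> {0..b} \<and> w' = f s'"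
      using graph_memD X(2,3) unfolding Xbf by blast+
    ultimately show ?thesis using geodesic_onD[of "{0..b}" f s s'] by simp
  qed
  show "s \<in> {0..2 * r} \<and> (s \<le> L \<longrightarrow> w = h s) \<and> (L \<le> s \<longrightarrow> w \<in> cball p r)"
    if sw: "(s, w) \<in> \<Union>C" for s w
  proof -
    obtain X where X: "X \<in> C" "(s, w) \<in> X" using sw by blast
    obtain b f where ext: "geodesic_extension_within (cball p r) L h b f"
      and Xbf: "X = (\<lambda>s. (s, f s)) ` {0..b}"
      using member[OF X(1)] by blast
    have "s \<in> {0..b}" "w = f s" using graph_memD X(2) unfolding Xbf by blast+
    moreover have "b \<le> 2 * r" using geodesic_extension_within_length[OF ext assms(2,3)] .
    moreover have "\<forall>s\<in>{0..L}. f s = h s" "f ` {L..b} \<subseteq> cball p r"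
      using ext by (simp_all add: geodesic_extension_within_def)
    ultimately show ?thesis by (auto simp: image_subset_iff)
  qed
  show "\<exists>w. (s, w) \<in> \<Union>C" if s'w': "(s', w') \<in> \<Union>C" and s: "s \<in> {0..s'}" for s s' w'
  proof -
    obtain X where X: "X \<in> C" "(s', w') \<in> X" using s'w' by blast
    obtain b f where Xbf: "X = (\<lambda>s. (s, f s)) ` {0..b}"
      using member[OF X(1)] by blast
    have "s' \<in> {0..b}" using graph_memD X(2) unfolding Xbf by blast
    then have "(s, f s) \<in> X" using s unfolding Xbf by auto
    then show ?thesis using X(1) by blast
  qed
  show "\<exists>w. (L, w) \<in> X" if X: "X \<in> C" for X
  proof -
    obtain b f where "geodesic_extension_within (cball p r) L h b f"
      and Xbf: "X = (\<lambda>s. (s, f s)) ` {0..b}"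
      using member[OF X] by blast
    then have "(L, f L) \<in> X" using \<open>0 \<le> L\<close> by (auto simp: geodesic_extension_within_def)
    then show ?thesis by blast
  qed
qed

lemma geodesic_extension_graphs_chain_bounded:
  fixes p :: "'a::metric_space"
  assumes "complete (UNIV :: 'a set)" "0 < L" "dist p (h 0) \<le> r"
    and C: "C \<in> chains (geodesic_extension_graphs (cball p r) L h)" "C \<noteq> {}"
  shows "\<exists>U\<in>geodesic_extension_graphs (cball p r) L h. \<forall>X\<in>C. X \<subseteq> U"
proof -
  let ?G = "\<Union>C"
  note iso = geodesic_extension_graphs_chain_union(1)[OF C(1) less_imp_le[OF \<open>0 < L\<close>] assms(3)]
    and point = geodesic_extension_graphs_chain_union(2)[OF C(1) less_imp_le[OF \<open>0 < L\<close>] assms(3)]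
    and down = geodesic_extension_graphs_chain_union(3)[OF C(1) less_imp_le[OF \<open>0 < L\<close>] assms(3)]
    and start = geodesic_extension_graphs_chain_union(4)[OF C(1) less_imp_le[OF \<open>0 < L\<close>] assms(3)]
  define T where "T = Sup (fst ` ?G)"
  obtain wL where wL: "(L, wL) \<in> ?G" using start C(2) by blast
  have range: "s \<in> {0..2 * r}" and on_h: "s \<le> L \<Longrightarrow> w = h s"
    and in_cball: "L \<le> s \<Longrightarrow> w \<in> cball p r" if "(s, w) \<in> ?G" for s w
    using point[OF that] by blast+
  have bdd: "bdd_above (fst ` ?G)"
    by (rule bdd_aboveI[of _ "2 * r"]) (use range in force)
  have le_T: "s \<le> T" if "(s, w) \<in> ?G" for s w
  proof -
    have "s \<in> fst ` ?G" using that by force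
    then show ?thesis unfolding T_def using bdd by (rule cSup_upper)
  qed
  have "L \<le> T" using le_T[OF wL] .
  have total: "\<exists>w. (s, w) \<in> ?G" if "s \<in> {0..<T}" for s
  proof -
    have "fst ` ?G \<noteq> {}" using wL by blast
    moreover have "s < Sup (fst ` ?G)" using that by (simp add: T_def)
    ultimately obtain s' where "s' \<in> fst ` ?G" "s < s'" using less_cSupE by blast
    then obtain w' where "(s', w') \<in> ?G" by force
    then show ?thesis using down[of s' w' s] that \<open>s < s'\<close> by auto
  qed
  have "0 < T" using \<open>0 < L\<close> \<open>L \<le> T\<close> by simp
  have dom: "s \<in> {0..T}" if "(s, w) \<in> ?G" for s w using range[OF that] le_T[OF that] by simp
  obtain f where f: "geodesic_on {0..T} f" and Gf: "?G \<subseteq> (\<lambda>s. (s, f s)) ` {0..T}"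
  proof (rule isometric_relation_extends_to_geodesic[OF assms(1) \<open>0 < T\<close>])
    show "\<And>s w s' w'. (s, w) \<in> ?G \<Longrightarrow> (s', w') \<in> ?G \<Longrightarrow> dist w w' = \<bar>s - s'\<bar>" by (rule iso)
    show "\<And>s w. (s, w) \<in> ?G \<Longrightarrow> s \<in> {0..T}" by (rule dom)
    show "\<And>s. s \<in> {0..<T} \<Longrightarrow> \<exists>w. (s, w) \<in> ?G" by (rule total)
  qed (rule that)
  have fG: "w = f s" if "(s, w) \<in> ?G" for s w using subsetD[OF Gf that] by auto
  have fT: "f T \<in> cball p r"
  proof (cases "\<exists>w. (T, w) \<in> ?G")
    case True
    then obtain w where w: "(T, w) \<in> ?G" by blast
    show ?thesis using in_cball[OF w \<open>L \<le> T\<close>] fG[OF w] by simp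
  next
    case False
    then have "L \<noteq> T" using wL by blast
    then have "L < T" using \<open>L \<le> T\<close> by simp
    have "dist p (f T) \<le> r + 2 * (T - u)" if "L \<le> u" "u < T" for u
    proof -
      have "u \<in> {0..<T}" using that \<open>0 < L\<close> by simp
      from total[OF this] obtain w where w: "(u, w) \<in> ?G" ..
      then have "dist p (f u) \<le> r" using in_cball[OF w \<open>L \<le> u\<close>] fG[OF w] by simp
      moreover have "dist (f u) (f T) = T - u"
        using geodesic_onD[OF f, of u T] that \<open>0 < L\<close> by simp
      ultimately show ?thesis using dist_triangle[of p "f T" "f u"] that by simp
    qed
    then show ?thesis using le_of_forall_le_plus_gap[OF \<open>L < T\<close>] by simp
  qed
  have fh: "\<forall>s\<in>{0..L}. f s = h s"
  proof
    fix s assume s: "s \<in> {0..L}"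
    obtain w where w: "(s, w) \<in> ?G" using down[OF wL s] by blast
    show "f s = h s" using on_h[OF w] fG[OF w] s by simp
  qed
  have fs: "f s \<in> cball p r" if s: "s \<in> {L..<T}" for s
  proof -
    have "s \<in> {0..<T}" using s \<open>0 < L\<close> by simp
    from total[OF this] obtain w where w: "(s, w) \<in> ?G" ..
    show ?thesis using in_cball[OF w] fG[OF w] s by simp
  qed
  have "f ` {L..T} \<subseteq> cball p r"
    using fT fs by (force simp: le_less)
  then have "geodesic_extension_within (cball p r) L h T f"
    using \<open>L \<le> T\<close> f fh by (simp add: geodesic_extension_within_def)
  then have "(\<lambda>s. (s, f s)) ` {0..T} \<in> geodesic_extension_graphs (cball p r) L h"
    unfolding geodesic_extension_graphs_def by blast
  moreover have "\<forall>X\<in>C. X \<subseteq> (\<lambda>s. (s, f s)) ` {0..T}" using Gf by blast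
  ultimately show ?thesis by (rule rev_bexI)
qed

lemma CAT_geodesic_extension_to_sphere:
  fixes p :: "'a::metric_space" and h :: "real \<Rightarrow> 'a"
  assumes cat: "CAT \<kappa> TYPE('a)" and rk: "ereal r < pi_kappa \<kappa> / 2"
    and man: "topological_manifold (ball p r) TYPE('n::finite)"
    and h: "geodesic_on {0..L} h" "0 < L" "dist p (h 0) \<le> r" "h L \<in> ball p r"
  obtains b f where "L \<le> b" "geodesic_on {0..b} f" "\<forall>s\<in>{0..L}. f s = h s" "dist p (f b) = r"
proof -
  let ?A = "geodesic_extension_graphs (cball p r) L h"
  have "\<exists>U\<in>?A. \<forall>X\<in>C. X \<subseteq> U" if "C \<in> chains ?A" for C
  proof (cases "C = {}")
    case True
    have "geodesic_extension_within (cball p r) L h L h"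
      using h by (simp add: geodesic_extension_within_def)
    then have "(\<lambda>s. (s, h s)) ` {0..L} \<in> ?A"
      unfolding geodesic_extension_graphs_def by blast
    then show ?thesis using True by blast
  next
    case False
    then show ?thesis
      using geodesic_extension_graphs_chain_bounded[OF CAT_complete[OF cat] h(2,3) that] by blast
  qed
  then have "\<exists>M\<in>?A. \<forall>X\<in>?A. M \<subseteq> X \<longrightarrow> X = M" by (intro Zorn_Lemma2 ballI)
  then obtain M where "M \<in> ?A" and maximal: "\<And>X. X \<in> ?A \<Longrightarrow> M \<subseteq> X \<Longrightarrow> X = M"
    by blast
  from \<open>M \<in> ?A\<close> obtain b f where ext: "geodesic_extension_within (cball p r) L h b f"
    and M: "M = (\<lambda>s. (s, f s)) ` {0..b}"
    unfolding geodesic_extension_graphs_def by blast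
  have "dist p (f b) = r"
  proof (rule ccontr)
    assume "dist p (f b) \<noteq> r"
    moreover have "f b \<in> cball p r"
      using ext by (auto simp: geodesic_extension_within_def image_subset_iff)
    ultimately have "f b \<in> ball p r" by simp
    then obtain b' f' where ext': "geodesic_extension_within (cball p r) L h b' f'"
      and "b < b'" and agree: "\<forall>s\<in>{0..b}. f' s = f s"
      using CAT_geodesic_extension_step[OF cat rk man ext h(2,3)] by blast
    have "M \<subseteq> (\<lambda>s. (s, f' s)) ` {0..b'}"
      using agree \<open>b < b'\<close> by (force simp: M)
    moreover have "(\<lambda>s. (s, f' s)) ` {0..b'} \<in> ?A"
      using ext' unfolding geodesic_extension_graphs_def by blast
    ultimately have graph_eq: "(\<lambda>s. (s, f' s)) ` {0..b'} = M" using maximal by blast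
    have "0 \<le> b'" using ext' h(2) by (simp add: geodesic_extension_within_def)
    then have "(b', f' b') \<in> (\<lambda>s. (s, f' s)) ` {0..b'}" by simp
    then have "b' \<in> {0..b}" unfolding graph_eq M using graph_memD by blast
    then show False using \<open>b < b'\<close> by simp
  qed
  with ext show thesis using that unfolding geodesic_extension_within_def by blast
qed

lemma CAT_geodesic_extension_two_sided:
  fixes p :: "'a::metric_space" and g :: "real \<Rightarrow> 'a"
  assumes cat: "CAT \<kappa> TYPE('a)" and rk: "ereal r < pi_kappa \<kappa> / 2"
    and man: "topological_manifold (ball p r) TYPE('n::finite)"
    and g: "geodesic_on {0..d} g" "0 < d" "g 0 \<in> ball p r" "g d \<in> ball p r"
  shows "\<exists>a b g'. a \<le> 0 \<and> d \<le> b \<and> geodesic_on {a..b} g' \<and> (\<forall>t\<in>{0..d}. g' t = g t) \<and>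
           dist p (g' a) = r \<and> dist p (g' b) = r"
proof -
  have "dist p (g 0) \<le> r" using g(3) by simp
  then obtain b g1 where "d \<le> b" and g1: "geodesic_on {0..b} g1" and g1g: "\<forall>s\<in>{0..d}. g1 s = g s"
    and g1b: "dist p (g1 b) = r"
    by (rule CAT_geodesic_extension_to_sphere[OF cat rk man g(1,2) _ g(4)])
  have "geodesic_on {b - b..b - 0} (\<lambda>s. g1 (b - s))" by (rule geodesic_on_reflect[OF g1])
  then have g1': "geodesic_on {0..b} (\<lambda>s. g1 (b - s))" by simp
  have "0 < b" using \<open>d \<le> b\<close> g(2) by simp
  have "dist p (g1 (b - 0)) \<le> r" using g1b by simp
  moreover have "g1 (b - b) \<in> ball p r" using g1g g(2,3) by simp
  ultimately obtain b2 g2 where "b \<le> b2" and g2: "geodesic_on {0..b2} g2"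
    and g2g1: "\<forall>s\<in>{0..b}. g2 s = g1 (b - s)" and g2b: "dist p (g2 b2) = r"
    by (rule CAT_geodesic_extension_to_sphere[OF cat rk man g1' \<open>0 < b\<close>])
  show ?thesis
  proof (intro exI conjI)
    show "b - b2 \<le> 0" "d \<le> b" using \<open>b \<le> b2\<close> \<open>d \<le> b\<close> by simp_all
    show "geodesic_on {b - b2..b} (\<lambda>s. g2 (b - s))"
      using geodesic_on_reflect[OF g2, of b] by simp
    show "\<forall>t\<in>{0..d}. g2 (b - t) = g t" using g1g g2g1 \<open>d \<le> b\<close> by auto
    show "dist p (g2 (b - (b - b2))) = r" using g2b by simp
    show "dist p (g2 (b - b)) = r" using g2g1 g1b \<open>0 < b\<close> by simp
  qed
qed

lemma CAT_geodesic_extension_through_point: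
  fixes p x :: "'a::metric_space"
  assumes cat: "CAT \<kappa> TYPE('a)" and rk: "ereal r < pi_kappa \<kappa> / 2"
    and man: "topological_manifold (ball p r) TYPE('n::finite)" and "x \<in> ball p r"
  obtains a b g' where "a \<le> 0" "0 \<le> b" "geodesic_on {a..b} g'" "g' 0 = x"
    "dist p (g' a) = r" "dist p (g' b) = r"
proof -
  obtain w where "w \<in> ball p r" "w \<noteq> x"
    by (rule topological_manifold_has_other_point[OF man open_ball \<open>x \<in> ball p r\<close>])
  obtain \<gamma> where "geodesic_path w x \<gamma>" using CAT_geodesic_path_exists[OF cat] by blast
  then have \<gamma>: "\<gamma> 0 = w" "\<gamma> (dist w x) = x" "geodesic_on {0..dist w x} \<gamma>"
    by (simp_all add: geodesic_path_iff_geodesic_on)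
  define D where "D = dist w x"
  have "\<exists>a b G. a \<le> 0 \<and> D \<le> b \<and> geodesic_on {a..b} G \<and> (\<forall>t\<in>{0..D}. G t = \<gamma> t) \<and>
      dist p (G a) = r \<and> dist p (G b) = r"
    using CAT_geodesic_extension_two_sided[OF cat rk man \<gamma>(3)] \<gamma>(1,2) \<open>w \<in> ball p r\<close>
      \<open>x \<in> ball p r\<close> \<open>w \<noteq> x\<close> unfolding D_def by simp
  then obtain a b G where "a \<le> 0" "D \<le> b" and G: "geodesic_on {a..b} G"
    and G\<gamma>: "\<forall>t\<in>{0..D}. G t = \<gamma> t" and "dist p (G a) = r" "dist p (G b) = r"
    by blast
  show thesis
  proof
    show "a - D \<le> 0" using \<open>a \<le> 0\<close> zero_le_dist[of w x] unfolding D_def by linarith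
    show "0 \<le> b - D" using \<open>D \<le> b\<close> by simp
    show "geodesic_on {a - D..b - D} (\<lambda>s. G (s + D))" by (rule geodesic_on_shift[OF G])
    show "G (0 + D) = x" using G\<gamma> \<gamma>(2) by (simp add: D_def)
    show "dist p (G (a - D + D)) = r" "dist p (G (b - D + D)) = r"
      using \<open>dist p (G a) = r\<close> \<open>dist p (G b) = r\<close> by simp_all
  qed
qed

theorem lemma3p1:
  fixes p x y :: "'a::metric_space" and \<kappa> r :: real and g :: "real \<Rightarrow> 'a"
  assumes "CAT \<kappa> TYPE('a)"
    and "ereal r < pi_kappa \<kappa> / 2"
    and "topological_manifold (ball p r) TYPE('n::finite)"
    and "geodesic_path x y g"
    and "g ` {0..dist x y} \<subseteq> ball p r"
  shows "\<exists>a b g'. a \<le> 0 \<and> dist x y \<le> b \<and>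
           (\<forall>s\<in>{a..b}. \<forall>t\<in>{a..b}. dist (g' s) (g' t) = \<bar>s - t\<bar>) \<and>
           (\<forall>t\<in>{0..dist x y}. g' t = g t) \<and>
           dist p (g' a) = r \<and> dist p (g' b) = r"
proof -
  have g: "g 0 = x" "g (dist x y) = y" "geodesic_on {0..dist x y} g"
    using assms(4) by (simp_all add: geodesic_path_iff_geodesic_on)
  have ends: "g 0 \<in> ball p r" "g (dist x y) \<in> ball p r"
    using assms(5) by (auto simp: image_subset_iff)
  have "\<exists>a b g'. a \<le> 0 \<and> dist x y \<le> b \<and> geodesic_on {a..b} g' \<and>
           (\<forall>t\<in>{0..dist x y}. g' t = g t) \<and> dist p (g' a) = r \<and> dist p (g' b) = r"
  proof (cases "x = y")
    case False
    then show ?thesis using CAT_geodesic_extension_two_sided[OF assms(1-3) g(3) _ ends] by simp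
  next
    case True
    have "x \<in> ball p r" using ends(1) g(1) by simp
    then obtain a b g' where "a \<le> 0" "0 \<le> b" "geodesic_on {a..b} g'" "g' 0 = x"
      "dist p (g' a) = r" "dist p (g' b) = r"
      by (rule CAT_geodesic_extension_through_point[OF assms(1-3)])
    then show ?thesis using True g(1) by auto
  qed
  then show ?thesis unfolding geodesic_on_def .
qed

end
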